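(* Let $L$ be a finite-dimensional semisimple Leibniz algebra over $\mathbb{C}$ with a decomposition $L=(\oplus_{i=1}^m\mathfrak{g}_i)\ltimes(\oplus_{k=1}^n I_k)$, where $\mathfrak{g}_1,\dots,\mathfrak{g}_m$ are simple Lie subalgebras whose direct sum is a subalgebra complementary to $I$, and $I=\oplus_{k=1}^n I_k$ is a decomposition into simple $(\oplus_{i=1}^m\mathfrak{g}_i)$-submodules. Let $\Gamma$ be the graph with vertex set $\{\mathfrak{g}_1,\dots,\mathfrak{g}_m\}$ in which distinct $\mathfrak{g}_i,\mathfrak{g}_j$ are joined by an edge if and only if there exists $k$ with $[I_k,\mathfrak{g}_i]=I_k=[I_k,\mathfrak{g}_j]$. Let $\mathrm{B}\Gamma$ be the bipartite graph with vertex classes $\{I_1,\dots,I_n\}$ and $\{\mathfrak{g}_1,\dots,\mathfrak{g}_m\}$, where $I_k$ and $\mathfrak{g}_i$ are joined if and only if $[I_k,\mathfrak{g}_i]=I_k$. Then the following are equivalent: (i) $[I_k,\oplus_{i=1}^m\mathfrak{g}_i]=I_k$ for all $k=1,\dots,n$, and $\Gamma$ is connected; (ii) $\mathrm{B}\Gamma$ is connected.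
   Context: A Leibniz algebra is a vector space $L$ with a bilinear bracket satisfying $[[x,y],z]=[[x,z],y]+[x,[y,z]]$. The subspace $I=\mathrm{Span}\langle [x,x]\mid x\in L\rangle$ is an ideal with $[L,I]=0$, $\mathfrak{g}_L=L/I$ is a Lie algebra, and $L$ is semisimple if $\mathfrak{g}_L$ is semisimple; then $L$ has a subalgebra isomorphic to $\mathfrak{g}_L$ complementary to $I$, and $I$ is a module over it via $i.g=[i,g]$. For each $k,i$ one has $[I_k,\mathfrak{g}_i]\in\{I_k,\{0\}\}$. *)

theory Defs
  imports Complex_Main
begin

definition leibniz_algebra :: "(complex \<Rightarrow> 'v::ab_group_add \<Rightarrow> 'v) \<Rightarrow> ('v \<Rightarrow> 'v \<Rightarrow> 'v) \<Rightarrow> bool" where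
  "leibniz_algebra sc br \<longleftrightarrow>
     vector_space sc \<and>
     (\<forall>x. Vector_Spaces.linear sc sc (br x)) \<and>
     (\<forall>y. Vector_Spaces.linear sc sc (\<lambda>x. br x y)) \<and>
     (\<forall>x y z. br (br x y) z = br (br x z) y + br x (br y z))"

definition fin_dim :: "(complex \<Rightarrow> 'v::ab_group_add \<Rightarrow> 'v) \<Rightarrow> bool" where
  "fin_dim sc \<longleftrightarrow> (\<exists>B. finite B \<and> module.span sc B = UNIV)"

definition brs :: "(complex \<Rightarrow> 'v::ab_group_add \<Rightarrow> 'v) \<Rightarrow> ('v \<Rightarrow> 'v \<Rightarrow> 'v) \<Rightarrow> 'v set \<Rightarrow> 'v set \<Rightarrow> 'v set" where
  "brs sc br A B = module.span sc {br a b | a b. a \<in> A \<and> b \<in> B}"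

definition leib_I :: "(complex \<Rightarrow> 'v::ab_group_add \<Rightarrow> 'v) \<Rightarrow> ('v \<Rightarrow> 'v \<Rightarrow> 'v) \<Rightarrow> 'v set" where
  "leib_I sc br = module.span sc {br x x | x. True}"

definition setsum :: "'v::ab_group_add set \<Rightarrow> 'v set \<Rightarrow> 'v set" where
  "setsum A B = {a + b | a b. a \<in> A \<and> b \<in> B}"

definition two_sided_ideal :: "(complex \<Rightarrow> 'v::ab_group_add \<Rightarrow> 'v) \<Rightarrow> ('v \<Rightarrow> 'v \<Rightarrow> 'v) \<Rightarrow> 'v set \<Rightarrow> bool" where
  "two_sided_ideal sc br J \<longleftrightarrow> module.subspace sc J \<and> (\<forall>x\<in>J. \<forall>y. br x y \<in> J \<and> br y x \<in> J)"

text \<open>Derived series of J/I, lifted to L: D_0 = J, D_(k+1) = [D_k, D_k] + I.\<close>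
primrec derived_mod :: "(complex \<Rightarrow> 'v::ab_group_add \<Rightarrow> 'v) \<Rightarrow> ('v \<Rightarrow> 'v \<Rightarrow> 'v) \<Rightarrow> 'v set \<Rightarrow> 'v set \<Rightarrow> nat \<Rightarrow> 'v set" where
  "derived_mod sc br I J 0 = J"
| "derived_mod sc br I J (Suc k) = setsum (brs sc br (derived_mod sc br I J k) (derived_mod sc br I J k)) I"

text \<open>L is semisimple iff the Lie algebra L/I is semisimple, i.e. has no nonzero solvable
  ideal. Ideals of L/I correspond to ideals J of L containing I; J/I is solvable iff
  some term of its derived series is contained in I.\<close>
definition leibniz_semisimple :: "(complex \<Rightarrow> 'v::ab_group_add \<Rightarrow> 'v) \<Rightarrow> ('v \<Rightarrow> 'v \<Rightarrow> 'v) \<Rightarrow> bool" where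
  "leibniz_semisimple sc br \<longleftrightarrow>
     (\<forall>J. two_sided_ideal sc br J \<and> leib_I sc br \<subseteq> J \<and>
          (\<exists>k. derived_mod sc br (leib_I sc br) J k \<subseteq> leib_I sc br) \<longrightarrow> J = leib_I sc br)"

definition simple_lie_subalgebra :: "(complex \<Rightarrow> 'v::ab_group_add \<Rightarrow> 'v) \<Rightarrow> ('v \<Rightarrow> 'v \<Rightarrow> 'v) \<Rightarrow> 'v set \<Rightarrow> bool" where
  "simple_lie_subalgebra sc br g \<longleftrightarrow>
     module.subspace sc g \<and> (\<forall>x\<in>g. \<forall>y\<in>g. br x y \<in> g) \<and> (\<forall>x\<in>g. br x x = 0) \<and>
     brs sc br g g \<noteq> {0} \<and>
     (\<forall>J. module.subspace sc J \<and> J \<subseteq> g \<and> (\<forall>x\<in>J. \<forall>y\<in>g. br x y \<in> J) \<longrightarrow> J = {0} \<or> J = g)"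

definition simple_submodule :: "(complex \<Rightarrow> 'v::ab_group_add \<Rightarrow> 'v) \<Rightarrow> ('v \<Rightarrow> 'v \<Rightarrow> 'v) \<Rightarrow> 'v set \<Rightarrow> 'v set \<Rightarrow> bool" where
  "simple_submodule sc br S M \<longleftrightarrow>
     module.subspace sc M \<and> M \<noteq> {0} \<and> (\<forall>x\<in>M. \<forall>s\<in>S. br x s \<in> M) \<and>
     (\<forall>N. module.subspace sc N \<and> N \<subseteq> M \<and> (\<forall>x\<in>N. \<forall>s\<in>S. br x s \<in> N) \<longrightarrow> N = {0} \<or> N = M)"

definition family_sum :: "'i set \<Rightarrow> ('i \<Rightarrow> 'v::ab_group_add set) \<Rightarrow> 'v set" where
  "family_sum A V = {\<Sum>i\<in>A. f i | f. \<forall>i\<in>A. f i \<in> V i}"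

definition family_independent :: "'i set \<Rightarrow> ('i \<Rightarrow> 'v::ab_group_add set) \<Rightarrow> bool" where
  "family_independent A V \<longleftrightarrow>
     (\<forall>f. (\<forall>i\<in>A. f i \<in> V i) \<and> (\<Sum>i\<in>A. f i) = 0 \<longrightarrow> (\<forall>i\<in>A. f i = 0))"

definition graph_connected :: "'a set \<Rightarrow> ('a \<Rightarrow> 'a \<Rightarrow> bool) \<Rightarrow> bool" where
  "graph_connected V E \<longleftrightarrow>
     (\<forall>x\<in>V. \<forall>y\<in>V. (x, y) \<in> {(a, b). a \<in> V \<and> b \<in> V \<and> E a b}\<^sup>*)"

end

theory Submission
  imports Defs
begin

text \<open>Write S for the sum of the g i. If M is a simple S-module and h is a subalgebra
  of S with [h, S] contained in h, the Leibniz identity [[x,a],s] = [[x,s],a] + [x,[a,s]]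
  shows that [M, h] is again an S-submodule of M, hence [M, h] is M or 0. As the g i
  commute, [g i, S] lies in g i, so [I k, S] = I k holds exactly when some g i acts
  nontrivially on I k, i.e. when I k is not isolated in the bipartite graph. The rest is
  graph theory: a bipartite graph without isolated vertices on one side is connected iff
  the other side is connected under "having a common neighbour". The degenerate case
  m = 0 is excluded by the algebra: then L = I, and since squares annihilate from the
  right, every square vanishes, so I = 0 and n = 0.\<close>

lemma mem_family_sum:
  assumes "finite A" "i \<in> A" "\<And>j. j \<in> A \<Longrightarrow> 0 \<in> V j" "x \<in> V i"
  shows "x \<in> family_sum A V"
proof -
  let ?f = "\<lambda>j. if j = i then x else 0"
  have "(\<Sum>j\<in>A. ?f j) = x"
    using assms(1,2) by simp
  moreover have "\<forall>j\<in>A. ?f j \<in> V j"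
    using assms by auto
  ultimately show ?thesis
    unfolding family_sum_def by (intro CollectI exI[of _ ?f]) auto
qed

locale leibniz = vector_space sc for sc :: "complex \<Rightarrow> 'v::ab_group_add \<Rightarrow> 'v" +
  fixes br :: "'v \<Rightarrow> 'v \<Rightarrow> 'v"
  assumes leibniz_algebra: "leibniz_algebra sc br"
begin

lemma module_hom_br_right: "module_hom sc sc (br x)"
  and module_hom_br_left: "module_hom sc sc (\<lambda>x. br x y)"
  and br_leibniz: "br (br x y) z = br (br x z) y + br x (br y z)"
  using leibniz_algebra unfolding leibniz_algebra_def module_hom_iff_linear by blast+

lemma br_sum_right: "br x (sum f A) = (\<Sum>i\<in>A. br x (f i))"
  using module_hom.sum[OF module_hom_br_right] .

lemma br_span_left_mem:
  assumes "v \<in> span X" "subspace N" "\<And>x. x \<in> X \<Longrightarrow> br x s \<in> N"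
  shows "br v s \<in> N"
proof -
  have "br v s \<in> span ((\<lambda>x. br x s) ` X)"
    using assms(1) module_hom.span_image[OF module_hom_br_left[of s]] by blast
  also have "\<dots> \<subseteq> N"
    using assms(2,3) by (intro span_minimal) auto
  finally show ?thesis .
qed

lemma br_square_right [simp]: "br x (br y y) = 0"
  using br_leibniz[of x y y] by simp

lemma br_leib_I_right: "v \<in> leib_I sc br \<Longrightarrow> br x v = 0"
  unfolding leib_I_def by (rule module_hom.eq_0_on_span[OF module_hom_br_right]) auto

lemma leib_I_eq_UNIV_trivial:
  assumes "leib_I sc br = UNIV"
  shows "UNIV = {0::'v}"
proof -
  have "br x x = 0" for x
    using br_leib_I_right[of x x] assms by simp
  then have "leib_I sc br = {0}"
    unfolding leib_I_def by simp
  with assms show ?thesis by simp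
qed

lemma subspace_brs: "subspace (brs sc br A B)"
  unfolding brs_def by simp

lemma br_mem_brs: "x \<in> A \<Longrightarrow> s \<in> B \<Longrightarrow> br x s \<in> brs sc br A B"
  unfolding brs_def by (rule span_base) auto

lemma brs_subset: "subspace M \<Longrightarrow> (\<And>x s. x \<in> A \<Longrightarrow> s \<in> B \<Longrightarrow> br x s \<in> M) \<Longrightarrow> brs sc br A B \<subseteq> M"
  unfolding brs_def by (rule span_minimal) auto

lemma brs_mono_right: "B \<subseteq> B' \<Longrightarrow> brs sc br A B \<subseteq> brs sc br A B'"
  unfolding brs_def by (rule span_mono) auto

lemma brs_right_closed:
  assumes M: "\<And>x s. x \<in> M \<Longrightarrow> s \<in> S \<Longrightarrow> br x s \<in> M"
    and h: "\<And>a s. a \<in> h \<Longrightarrow> s \<in> S \<Longrightarrow> br a s \<in> h"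
    and v: "v \<in> brs sc br M h" and s: "s \<in> S"
  shows "br v s \<in> brs sc br M h"
  using v[unfolded brs_def] subspace_brs
proof (rule br_span_left_mem)
  fix z assume "z \<in> {br x a |x a. x \<in> M \<and> a \<in> h}"
  then obtain x a where z: "z = br x a" and x: "x \<in> M" and a: "a \<in> h" by blast
  have "br z s = br (br x s) a + br x (br a s)"
    unfolding z by (rule br_leibniz)
  moreover have "br (br x s) a \<in> brs sc br M h" "br x (br a s) \<in> brs sc br M h"
    using M[OF x s] a x h[OF a s] by (auto intro: br_mem_brs)
  ultimately show "br z s \<in> brs sc br M h"
    using subspace_brs by (simp add: subspace_add)
qed

lemma simple_submodule_nonzero:
  assumes "simple_submodule sc br S M"
  shows "\<exists>x\<in>M. x \<noteq> 0"
proof -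
  have "subspace M" "M \<noteq> {0}"
    using assms unfolding simple_submodule_def by blast+
  then show ?thesis
    using subspace_0 by blast
qed

lemma simple_submodule_brs_cases:
  assumes M: "simple_submodule sc br S M"
    and hS: "h \<subseteq> S" and h: "\<And>a s. a \<in> h \<Longrightarrow> s \<in> S \<Longrightarrow> br a s \<in> h"
  shows "brs sc br M h = M \<or> brs sc br M h = {0}"
proof -
  have "subspace M" and M_closed: "\<And>x s. x \<in> M \<Longrightarrow> s \<in> S \<Longrightarrow> br x s \<in> M"
    using M unfolding simple_submodule_def by auto
  then have "brs sc br M h \<subseteq> M"
    using hS by (intro brs_subset) auto
  moreover have "\<forall>v\<in>brs sc br M h. \<forall>s\<in>S. br v s \<in> brs sc br M h"
    using brs_right_closed[OF M_closed h] by blast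
  ultimately show ?thesis
    using M subspace_brs unfolding simple_submodule_def by blast
qed


definition commuting_subalgebras :: "'i set \<Rightarrow> ('i \<Rightarrow> 'v set) \<Rightarrow> bool" where
  "commuting_subalgebras A g \<longleftrightarrow>
     (\<forall>i\<in>A. subspace (g i) \<and> (\<forall>a\<in>g i. \<forall>b\<in>g i. br a b \<in> g i)) \<and>
     (\<forall>i\<in>A. \<forall>j\<in>A. i \<noteq> j \<longrightarrow> brs sc br (g i) (g j) = {0})"

lemma
  assumes "commuting_subalgebras A g" "i \<in> A"
  shows commuting_subalgebras_subspace: "subspace (g i)"
    and commuting_subalgebras_closed: "a \<in> g i \<Longrightarrow> b \<in> g i \<Longrightarrow> br a b \<in> g i"
    and commuting_subalgebras_commute: "j \<in> A \<Longrightarrow> i \<noteq> j \<Longrightarrow> brs sc br (g i) (g j) = {0}"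
  using assms unfolding commuting_subalgebras_def by blast+

lemma br_family_sum_right_mem:
  assumes g: "commuting_subalgebras A g" and i: "i \<in> A"
    and a: "a \<in> g i" and s: "s \<in> family_sum A g"
  shows "br a s \<in> g i"
proof -
  obtain f where f: "\<And>j. j \<in> A \<Longrightarrow> f j \<in> g j" and s_eq: "s = (\<Sum>j\<in>A. f j)"
    using s unfolding family_sum_def by blast
  have "br a (f j) \<in> g i" if j: "j \<in> A" for j
  proof (cases "j = i")
    case True
    then show ?thesis
      using commuting_subalgebras_closed[OF g i a] f j by simp
  next
    case False
    then have "br a (f j) \<in> {0}"
      using br_mem_brs[OF a f[OF j]] commuting_subalgebras_commute[OF g i j] by simp
    then show ?thesis
      using subspace_0[OF commuting_subalgebras_subspace[OF g i]] by simp
  qed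
  then show ?thesis
    unfolding s_eq br_sum_right by (rule subspace_sum[OF commuting_subalgebras_subspace[OF g i]])
qed

lemma subalgebra_subset_family_sum:
  assumes "finite A" "commuting_subalgebras A g" "i \<in> A"
  shows "g i \<subseteq> family_sum A g"
  using mem_family_sum[OF assms(1,3)] subspace_0[OF commuting_subalgebras_subspace[OF assms(2)]]
  by blast

lemma simple_submodule_brs_family_sum_eq_iff:
  assumes A: "finite A" and g: "commuting_subalgebras A g"
    and M: "simple_submodule sc br (family_sum A g) M"
  shows "brs sc br M (family_sum A g) = M \<longleftrightarrow> (\<exists>i\<in>A. brs sc br M (g i) = M)"
proof
  assume full: "brs sc br M (family_sum A g) = M"
  show "\<exists>i\<in>A. brs sc br M (g i) = M"
  proof (rule ccontr)
    assume none: "\<not> ?thesis"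
    have zero: "brs sc br M (g i) = {0}" if i: "i \<in> A" for i
      using simple_submodule_brs_cases[OF M subalgebra_subset_family_sum[OF A g i]
          br_family_sum_right_mem[OF g i]] none i by blast
    have "brs sc br M (family_sum A g) \<subseteq> {0}"
    proof (rule brs_subset)
      fix x s assume x: "x \<in> M" and "s \<in> family_sum A g"
      then obtain f where f: "\<And>j. j \<in> A \<Longrightarrow> f j \<in> g j" and s_eq: "s = (\<Sum>j\<in>A. f j)"
        unfolding family_sum_def by blast
      have "br x (f j) = 0" if j: "j \<in> A" for j
        using br_mem_brs[OF x f[OF j]] zero[OF j] by simp
      then show "br x s \<in> {0}"
        by (simp add: s_eq br_sum_right)
    qed simp
    with full simple_submodule_nonzero[OF M] show False
      by blast
  qed
next
  assume "\<exists>i\<in>A. brs sc br M (g i) = M"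
  then obtain i where i: "i \<in> A" and gi_full: "brs sc br M (g i) = M" ..
  have "M \<subseteq> brs sc br M (family_sum A g)"
    using brs_mono_right[OF subalgebra_subset_family_sum[OF A g i]] gi_full by blast
  moreover have "brs sc br M (family_sum A g) \<subseteq> M"
    using M unfolding simple_submodule_def by (intro brs_subset) auto
  ultimately show "brs sc br M (family_sum A g) = M"
    by blast
qed

end

definition incidence_adj :: "('k \<Rightarrow> 'i \<Rightarrow> bool) \<Rightarrow> 'k + 'i \<Rightarrow> 'k + 'i \<Rightarrow> bool" where
  "incidence_adj A u v \<longleftrightarrow>
     (\<exists>k i. u = Inl k \<and> v = Inr i \<and> A k i) \<or> (\<exists>k i. u = Inr i \<and> v = Inl k \<and> A k i)"

definition common_neighbour_adj :: "'k set \<Rightarrow> ('k \<Rightarrow> 'i \<Rightarrow> bool) \<Rightarrow> 'i \<Rightarrow> 'i \<Rightarrow> bool" where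
  "common_neighbour_adj K A i j \<longleftrightarrow> i \<noteq> j \<and> (\<exists>k\<in>K. A k i \<and> A k j)"

lemma incidence_walk_of_common_neighbour_walk:
  assumes "(i, j) \<in> {(a, b). a \<in> G \<and> b \<in> G \<and> common_neighbour_adj K A a b}\<^sup>*"
  shows "(Inr i, Inr j) \<in> {(u, v). u \<in> Inl ` K \<union> Inr ` G \<and> v \<in> Inl ` K \<union> Inr ` G \<and> incidence_adj A u v}\<^sup>*"
  using assms
proof (induction rule: rtrancl_induct)
  case (step j j')
  then obtain k where "k \<in> K" "A k j" "A k j'" "j \<in> G" "j' \<in> G"
    unfolding common_neighbour_adj_def by auto
  then have "(Inr j, Inl k) \<in> {(u, v). u \<in> Inl ` K \<union> Inr ` G \<and> v \<in> Inl ` K \<union> Inr ` G \<and> incidence_adj A u v}"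
    and "(Inl k, Inr j') \<in> {(u, v). u \<in> Inl ` K \<union> Inr ` G \<and> v \<in> Inl ` K \<union> Inr ` G \<and> incidence_adj A u v}"
    unfolding incidence_adj_def by auto
  with step.IH show ?case
    by (meson rtrancl_into_rtrancl)
qed simp

lemma common_neighbour_walk_of_incidence_walk:
  assumes "(Inr i, w) \<in> {(u, v). u \<in> Inl ` K \<union> Inr ` G \<and> v \<in> Inl ` K \<union> Inr ` G \<and> incidence_adj A u v}\<^sup>*"
    and "j \<in> G" "w = Inr j \<or> (\<exists>k. w = Inl k \<and> A k j)"
  shows "(i, j) \<in> {(a, b). a \<in> G \<and> b \<in> G \<and> common_neighbour_adj K A a b}\<^sup>*"
  using assms
proof (induction arbitrary: j rule: rtrancl_induct)
  case base
  then show ?case by simp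
next
  case (step v w)
  then have vw: "v \<in> Inl ` K \<union> Inr ` G" "w \<in> Inl ` K \<union> Inr ` G" "incidence_adj A v w"
    by auto
  show ?case
  proof (cases v)
    case (Inl k)
    with vw obtain j' where "w = Inr j'" "A k j'"
      unfolding incidence_adj_def by auto
    with step.prems have "A k j"
      by auto
    with Inl step.IH step.prems show ?thesis
      by blast
  next
    case (Inr j')
    with vw obtain k where k: "w = Inl k" "A k j'" "k \<in> K" "j' \<in> G"
      unfolding incidence_adj_def by auto
    with step.prems have "A k j"
      by auto
    moreover have "(i, j') \<in> {(a, b). a \<in> G \<and> b \<in> G \<and> common_neighbour_adj K A a b}\<^sup>*"
      using step.IH Inr k by blast
    ultimately show ?thesis
      using k step.prems unfolding common_neighbour_adj_def
      by (cases "j = j'") (auto intro: rtrancl_into_rtrancl)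
  qed
qed

lemma graph_connected_incidence_iff:
  assumes "G = {} \<Longrightarrow> K = {}"
  shows "graph_connected (Inl ` K \<union> Inr ` G) (incidence_adj A)
    \<longleftrightarrow> (\<forall>k\<in>K. \<exists>i\<in>G. A k i) \<and> graph_connected G (common_neighbour_adj K A)"
  (is "graph_connected ?V _ \<longleftrightarrow> ?covered \<and> graph_connected G _")
proof -
  let ?EB = "{(u, v). u \<in> ?V \<and> v \<in> ?V \<and> incidence_adj A u v}"
  show ?thesis
  proof
    assume conn: "graph_connected ?V (incidence_adj A)"
    have ?covered
    proof
      fix k assume k: "k \<in> K"
      then obtain i0 where "i0 \<in> G"
        using assms by blast
      with k conn have "(Inl k, Inr i0) \<in> ?EB\<^sup>*"
        unfolding graph_connected_def by blast
      then obtain w where "(Inl k, w) \<in> ?EB"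
        by (cases rule: converse_rtranclE) auto
      then show "\<exists>i\<in>G. A k i"
        unfolding incidence_adj_def by auto
    qed
    moreover have "graph_connected G (common_neighbour_adj K A)"
      unfolding graph_connected_def
    proof (intro ballI)
      fix i j assume "i \<in> G" "j \<in> G"
      with conn have "(Inr i, Inr j) \<in> ?EB\<^sup>*"
        unfolding graph_connected_def by blast
      with \<open>j \<in> G\<close> show "(i, j) \<in> {(a, b). a \<in> G \<and> b \<in> G \<and> common_neighbour_adj K A a b}\<^sup>*"
        by (intro common_neighbour_walk_of_incidence_walk) auto
    qed
    ultimately show "?covered \<and> graph_connected G (common_neighbour_adj K A)" ..
  next
    assume "?covered \<and> graph_connected G (common_neighbour_adj K A)"
    then have covered: ?covered and conn: "graph_connected G (common_neighbour_adj K A)"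
      by blast+
    have to_G: "\<exists>i\<in>G. (u, Inr i) \<in> ?EB\<^sup>* \<and> (Inr i, u) \<in> ?EB\<^sup>*" if u: "u \<in> ?V" for u
    proof (cases u)
      case (Inl k)
      with u covered obtain i where "i \<in> G" "A k i" "k \<in> K"
        by blast
      with Inl have "i \<in> G" "(u, Inr i) \<in> ?EB" "(Inr i, u) \<in> ?EB"
        unfolding incidence_adj_def by auto
      then show ?thesis by blast
    qed (use u in auto)
    show "graph_connected ?V (incidence_adj A)"
      unfolding graph_connected_def
    proof (intro ballI)
      fix u v assume "u \<in> ?V" "v \<in> ?V"
      then obtain i j where "i \<in> G" "j \<in> G" "(u, Inr i) \<in> ?EB\<^sup>*" "(Inr j, v) \<in> ?EB\<^sup>*"
        using to_G by meson
      moreover have "(Inr i, Inr j) \<in> ?EB\<^sup>*"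
        using conn calculation(1,2) unfolding graph_connected_def
        by (blast intro: incidence_walk_of_common_neighbour_walk)
      ultimately show "(u, v) \<in> ?EB\<^sup>*"
        by (meson rtrancl_trans)
    qed
  qed
qed

theorem corollary3p6:
  fixes sc :: "complex \<Rightarrow> 'v::ab_group_add \<Rightarrow> 'v"
    and br :: "'v \<Rightarrow> 'v \<Rightarrow> 'v"
    and g :: "nat \<Rightarrow> 'v set" and Ik :: "nat \<Rightarrow> 'v set"
    and m n :: nat
  assumes leib: "leibniz_algebra sc br"
    and fd: "fin_dim sc"
    and ss: "leibniz_semisimple sc br"
    and g_simple: "\<And>i. i \<in> {1..m} \<Longrightarrow> simple_lie_subalgebra sc br (g i)"
    and g_indep: "family_independent {1..m} g"
    and g_comm: "\<And>i j. i \<in> {1..m} \<Longrightarrow> j \<in> {1..m} \<Longrightarrow> i \<noteq> j \<Longrightarrow> brs sc br (g i) (g j) = {0}"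
    and S_compl: "family_sum {1..m} g \<inter> leib_I sc br = {0}"
    and S_span: "setsum (family_sum {1..m} g) (leib_I sc br) = UNIV"
    and I_simple: "\<And>k. k \<in> {1..n} \<Longrightarrow> simple_submodule sc br (family_sum {1..m} g) (Ik k)"
    and I_indep: "family_independent {1..n} Ik"
    and I_sum: "family_sum {1..n} Ik = leib_I sc br"
  shows "((\<forall>k\<in>{1..n}. brs sc br (Ik k) (family_sum {1..m} g) = Ik k) \<and>
          graph_connected {1..m}
            (\<lambda>i j. i \<noteq> j \<and> (\<exists>k\<in>{1..n}. brs sc br (Ik k) (g i) = Ik k \<and> brs sc br (Ik k) (g j) = Ik k)))
     \<longleftrightarrow>
         graph_connected (Inl ` {1..n} \<union> Inr ` {1..m})
            (\<lambda>u v. (\<exists>k i. u = Inl k \<and> v = Inr i \<and> brs sc br (Ik k) (g i) = Ik k) \<or>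
                   (\<exists>k i. u = Inr i \<and> v = Inl k \<and> brs sc br (Ik k) (g i) = Ik k))"
proof -
  have "vector_space sc"
    using leib unfolding leibniz_algebra_def by blast
  then interpret leibniz sc br
    by (rule leibniz.intro[OF _ leibniz_axioms.intro[OF leib]])
  let ?S = "family_sum {1..m} g"
  let ?A = "\<lambda>k i. brs sc br (Ik k) (g i) = Ik k"
  have "subspace (g i) \<and> (\<forall>a\<in>g i. \<forall>b\<in>g i. br a b \<in> g i)" if "i \<in> {1..m}" for i
    using g_simple[OF that] unfolding simple_lie_subalgebra_def by blast
  then have g: "commuting_subalgebras {1..m} g"
    using g_comm unfolding commuting_subalgebras_def by simp
  have full_iff: "(\<forall>k\<in>{1..n}. brs sc br (Ik k) ?S = Ik k) \<longleftrightarrow> (\<forall>k\<in>{1..n}. \<exists>i\<in>{1..m}. ?A k i)"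
    using simple_submodule_brs_family_sum_eq_iff[OF _ g I_simple] by simp
  have "{1..n} = {}" if "{1..m} = {}"
  proof -
    have "?S = {0}"
      using that unfolding family_sum_def by simp
    then have "leib_I sc br = UNIV"
      using S_span unfolding setsum_def by auto
    then have "UNIV = {0::'v}"
      by (rule leib_I_eq_UNIV_trivial)
    then show ?thesis
      using simple_submodule_nonzero[OF I_simple] by blast
  qed
  from graph_connected_incidence_iff[where G = "{1..m}" and K = "{1..n}" and A = ?A, OF this]
  show ?thesis
    unfolding full_iff incidence_adj_def common_neighbour_adj_def by simp
qed

end
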